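(* Let $r\in\mathbb{N}$ and let $G$ be a countable graph with infinitely many connected components. Then $\mathrm{Rd}_r(G)\ge 1/r$.
   Context: $K_{\mathbb{N}}$ is the complete graph on $\mathbb{N}=\{1,2,\dots\}$; a copy of $G$ is a subgraph of $K_\mathbb{N}$ isomorphic to $G$, monochromatic if all its edges have the same color. $\overline{d}(V)=\limsup_{t\to\infty}|V\cap\{1,\dots,t\}|/t$. For an $r$-coloring $\varphi$ of the edges of $K_\mathbb{N}$, $\mathrm{Rd}_\varphi(G)$ is the supremum of upper densities of monochromatic copies of $G$; $\mathrm{Rd}_r(G)=\inf_\varphi \mathrm{Rd}_\varphi(G)$ over all $r$-colorings. *)

theory Defs
  imports "HOL-Analysis.Analysis"
begin

definition simple_graph :: "'a set \<Rightarrow> 'a set set \<Rightarrow> bool" where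
  "simple_graph V E \<longleftrightarrow> E \<subseteq> {{u, v} | u v. u \<in> V \<and> v \<in> V \<and> u \<noteq> v}"

definition reach :: "'a set \<Rightarrow> 'a set set \<Rightarrow> 'a \<Rightarrow> 'a \<Rightarrow> bool" where
  "reach V E = (\<lambda>u v. u \<in> V \<and> v \<in> V \<and> {u, v} \<in> E)\<^sup>*\<^sup>*"

definition components :: "'a set \<Rightarrow> 'a set set \<Rightarrow> 'a set set" where
  "components V E = {{w \<in> V. reach V E v w} | v. v \<in> V}"

definition KN_edges :: "nat set set" where
  "KN_edges = {{x, y} | x y. 1 \<le> x \<and> 1 \<le> y \<and> x \<noteq> y}"

text \<open>An r-colouring of the edges of \<open>K_\<nat>\<close> (values on non-edges are irrelevant).\<close>
definition coloring :: "nat \<Rightarrow> (nat set \<Rightarrow> nat) \<Rightarrow> bool" where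
  "coloring r \<phi> \<longleftrightarrow> (\<forall>e \<in> KN_edges. \<phi> e < r)"

definition is_copy :: "'a set \<Rightarrow> 'a set set \<Rightarrow> nat set \<Rightarrow> nat set set \<Rightarrow> bool" where
  "is_copy V E W F \<longleftrightarrow> W \<subseteq> {1..} \<and> F \<subseteq> KN_edges \<and> (\<forall>e \<in> F. e \<subseteq> W) \<and>
     (\<exists>f. bij_betw f V W \<and> (\<forall>u \<in> V. \<forall>v \<in> V. {u, v} \<in> E \<longleftrightarrow> {f u, f v} \<in> F))"

definition monochromatic :: "(nat set \<Rightarrow> nat) \<Rightarrow> nat set set \<Rightarrow> bool" where
  "monochromatic \<phi> F \<longleftrightarrow> (\<exists>c. \<forall>e \<in> F. \<phi> e = c)"

definition upper_density :: "nat set \<Rightarrow> ereal" where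
  "upper_density W = limsup (\<lambda>t. ereal (real (card (W \<inter> {1..t})) / real t))"

definition Rd_col :: "(nat set \<Rightarrow> nat) \<Rightarrow> 'a set \<Rightarrow> 'a set set \<Rightarrow> ereal" where
  "Rd_col \<phi> V E = Sup {upper_density W | W F. is_copy V E W F \<and> monochromatic \<phi> F}"

definition Rd :: "nat \<Rightarrow> 'a set \<Rightarrow> 'a set set \<Rightarrow> ereal" where
  "Rd r V E = Inf {Rd_col \<phi> V E | \<phi>. coloring r \<phi>}"

end

theory Submission
  imports Defs "HOL-Library.Ramsey" "HOL-Library.Nat_Bijection"
begin

text \<open>By Ramsey's theorem all but finitely many \<open>n \<ge> 1\<close> lie in an infinite
  monochromatic clique, so for some colour \<open>c\<close> the set \<open>T\<close> of vertices of infinite \<open>c\<close>-cliques has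
  upper density at least \<open>1/r\<close>. Because \<open>G\<close> has infinitely many components, \<open>G\<close> can be embedded
  with its image containing \<open>T\<close>: the components are placed in an interleaved greedy fashion, each
  with its root at the least unused element of \<open>T\<close> and its other vertices inside an infinite
  \<open>c\<close>-clique through that root, so every component is mapped monochromatically.\<close>

lemma upper_density_mono:
  assumes "A \<subseteq> B"
  shows "upper_density A \<le> upper_density B"
  unfolding upper_density_def
proof (intro Limsup_mono always_eventually allI)
  fix t
  have "card (A \<inter> {1..t}) \<le> card (B \<inter> {1..t})"
    using assms by (intro card_mono) auto
  then show "ereal (card (A \<inter> {1..t}) / t) \<le> ereal (card (B \<inter> {1..t}) / t)"
    by (simp add: divide_right_mono)
qed

lemma upper_density_Un:
  "upper_density (A \<union> B) \<le> upper_density A + upper_density B"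
proof -
  let ?d = "\<lambda>(S :: nat set) (t :: nat). ereal (card (S \<inter> {1..t}) / t)"
  have "upper_density (A \<union> B) \<le> limsup (\<lambda>t. ?d A t + ?d B t)"
    unfolding upper_density_def
  proof (intro Limsup_mono always_eventually allI)
    fix t
    have "card ((A \<union> B) \<inter> {1..t}) \<le> card (A \<inter> {1..t}) + card (B \<inter> {1..t})"
      by (metis Int_Un_distrib2 card_Un_le)
    then have "real (card ((A \<union> B) \<inter> {1..t})) / t \<le> (card (A \<inter> {1..t}) + card (B \<inter> {1..t})) / t"
      by (intro divide_right_mono) auto
    then show "?d (A \<union> B) t \<le> ?d A t + ?d B t"
      by (simp add: add_divide_distrib)
  qed
  also have "\<dots> \<le> upper_density A + upper_density B"
    unfolding upper_density_def by (rule ereal_limsup_add_mono)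
  finally show ?thesis .
qed

lemma upper_density_finite:
  assumes "finite A"
  shows "upper_density A = 0"
proof -
  have "(\<lambda>t. real (card (A \<inter> {1..t})) / t) \<longlonglongrightarrow> 0"
  proof (rule real_tendsto_sandwich)
    show "\<forall>\<^sub>F t in sequentially. 0 \<le> real (card (A \<inter> {1..t})) / t"
      by simp
    show "\<forall>\<^sub>F t in sequentially. real (card (A \<inter> {1..t})) / t \<le> card A / t"
      using assms by (intro always_eventually allI divide_right_mono) (auto intro: card_mono)
    show "(\<lambda>t. real (card A) / t) \<longlonglongrightarrow> 0"
      by (rule lim_const_over_n)
  qed auto
  then show ?thesis
    unfolding upper_density_def zero_ereal_def
    by (intro lim_imp_Limsup) (auto intro: tendsto_intros)
qed

lemma upper_density_UN:
  assumes "finite I"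
  shows "upper_density (\<Union>i\<in>I. A i) \<le> (\<Sum>i\<in>I. upper_density (A i))"
  using assms
proof (induction I rule: finite_induct)
  case empty
  then show ?case by (simp add: upper_density_finite)
next
  case (insert i I)
  have "upper_density (\<Union>j\<in>insert i I. A j) \<le> upper_density (A i) + upper_density (\<Union>j\<in>I. A j)"
    by (simp add: upper_density_Un)
  also have "\<dots> \<le> upper_density (A i) + (\<Sum>j\<in>I. upper_density (A j))"
    using insert.IH by (rule add_left_mono)
  finally show ?case
    using insert.hyps by simp
qed

lemma upper_density_atLeast_1: "upper_density {1..} = 1"
proof -
  have "\<forall>\<^sub>F t in sequentially. ereal (card ({1..} \<inter> {1..t}) / t) = 1"
    using eventually_ge_at_top[of 1] by eventually_elim simp
  then have "(\<lambda>t. ereal (card ({1..} \<inter> {1..t}) / t)) \<longlonglongrightarrow> 1"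
    by (rule tendsto_eventually)
  then show ?thesis
    unfolding upper_density_def by (rule lim_imp_Limsup[OF trivial_limit_sequentially])
qed

lemma upper_density_pigeonhole:
  fixes r :: nat
  assumes "r \<ge> 1" and "finite ({1..} - (\<Union>c<r. A c))"
  shows "\<exists>c<r. ereal (1 / r) \<le> upper_density (A c)"
proof -
  let ?u = "\<lambda>c. upper_density (A c)"
  have "Max (?u ` {..<r}) \<in> ?u ` {..<r}"
    using assms(1) by (intro Max_in) (auto simp: lessThan_empty_iff)
  then obtain c where c: "c < r" and "?u c = Max (?u ` {..<r})"
    by auto
  then have max: "?u c' \<le> ?u c" if "c' < r" for c'
    using that by simp
  have "1 = upper_density {1..}"
    by (rule upper_density_atLeast_1[symmetric])
  also have "\<dots> \<le> upper_density ((\<Union>c<r. A c) \<union> ({1..} - (\<Union>c<r. A c)))"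
    by (intro upper_density_mono) auto
  also have "\<dots> \<le> (\<Sum>c'<r. upper_density (A c'))"
    using upper_density_Un[of "\<Union>c<r. A c"] upper_density_UN[of "{..<r}" A]
      upper_density_finite[OF assms(2)] by (metis add.right_neutral order.trans finite_lessThan)
  also have "\<dots> \<le> (\<Sum>c'<r. upper_density (A c))"
    using max by (intro sum_mono) auto
  also have "\<dots> = ereal r * upper_density (A c)"
    by (simp add: sum_constant_ereal mult.commute)
  finally have "1 \<le> ereal r * upper_density (A c)" .
  then have "ereal (1 / r) \<le> upper_density (A c)"
    using assms(1)
    by (smt (verit, best) PInfty_neq_ereal(1) ereal_divide ereal_divide_le_pos
        ereal_less(2) not_one_le_zero of_nat_le_0_iff one_ereal_def)
  then show ?thesis
    using c by blast
qed

definition mono_clique :: "(nat set \<Rightarrow> nat) \<Rightarrow> nat \<Rightarrow> nat set \<Rightarrow> bool" where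
  "mono_clique \<phi> c K \<longleftrightarrow> K \<subseteq> {1..} \<and> (\<forall>a\<in>K. \<forall>b\<in>K. a \<noteq> b \<longrightarrow> \<phi> {a, b} = c)"

definition infinite_clique_vertices :: "(nat set \<Rightarrow> nat) \<Rightarrow> nat \<Rightarrow> nat set" where
  "infinite_clique_vertices \<phi> c = \<Union>{K. mono_clique \<phi> c K \<and> infinite K}"

lemma finite_not_in_infinite_cliques:
  assumes "coloring r \<phi>"
  shows "finite ({1..} - (\<Union>c<r. infinite_clique_vertices \<phi> c))"
proof (rule ccontr)
  let ?Z = "{1..} - (\<Union>c<r. infinite_clique_vertices \<phi> c)"
  assume "infinite ?Z"
  moreover have "\<forall>x\<in>?Z. \<forall>y\<in>?Z. x \<noteq> y \<longrightarrow> \<phi> {x, y} < r"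
  proof (intro ballI impI)
    fix x y
    assume "x \<in> ?Z" "y \<in> ?Z" "x \<noteq> y"
    then have "{x, y} \<in> KN_edges"
      unfolding KN_edges_def by auto
    then show "\<phi> {x, y} < r"
      using assms unfolding coloring_def by blast
  qed
  ultimately have "\<exists>Y c. Y \<subseteq> ?Z \<and> infinite Y \<and> c < r \<and>
      (\<forall>x\<in>Y. \<forall>y\<in>Y. x \<noteq> y \<longrightarrow> \<phi> {x, y} = c)"
    by (rule Ramsey2)
  then obtain Y c where Y: "Y \<subseteq> ?Z" "infinite Y" "c < r"
    and mono: "\<forall>x\<in>Y. \<forall>y\<in>Y. x \<noteq> y \<longrightarrow> \<phi> {x, y} = c"
    by blast
  have "mono_clique \<phi> c Y"
    unfolding mono_clique_def using Y(1) mono by auto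
  then have "Y \<subseteq> infinite_clique_vertices \<phi> c"
    unfolding infinite_clique_vertices_def using Y(2) by blast
  moreover obtain y where "y \<in> Y"
    using Y(2) by (metis finite.emptyI ex_in_conv)
  ultimately show False
    using Y(1,3) by blast
qed

lemma prod_encode_0_less:
  assumes "0 < k"
  shows "prod_encode (i, 0) < prod_encode (i, k)"
proof -
  have "mono triangle"
    by (rule mono_iff_le_Suc[THEN iffD2]) simp
  then have "triangle (Suc i) \<le> triangle (i + k)"
    using assms by (auto dest: monoD[of _ "Suc i" "i + k"])
  moreover have "prod_encode (i, 0) = triangle i + i" "prod_encode (i, k) = triangle (i + k) + i"
    by (simp_all add: prod_encode_def)
  ultimately show ?thesis
    by simp
qed

lemma Least_fresh:
  fixes A F :: "nat set"
  assumes "infinite A" and "finite F"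
  shows "(LEAST x. x \<in> A \<and> x \<notin> F) \<in> A - F"
proof -
  obtain y where "y \<in> A - F"
    using Diff_infinite_finite[OF assms(2,1)] by (metis finite.emptyI ex_in_conv)
  then show ?thesis
    by (metis (mono_tags, lifting) DiffD1 DiffD2 DiffI LeastI)
qed

text \<open>Slot \<open>prod_encode (i, k)\<close> receives the \<open>k\<close>-th vertex of the \<open>i\<close>-th star, \<open>k = 0\<close> being its
  root; slots with \<open>k \<notin> idx i\<close> stay unused and hold the junk value \<open>0\<close>, hence \<open>0 \<notin> T\<close>.
  Since roots precede their leaves, each value depends only on earlier ones.\<close>
locale star_cover =
  fixes T :: "nat set" and K idx :: "nat \<Rightarrow> nat set"
  assumes infinite_T: "infinite T"
    and zero_notin_T: "0 \<notin> T"
    and mem_K: "x \<in> T \<Longrightarrow> x \<in> K x"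
    and infinite_K: "x \<in> T \<Longrightarrow> infinite (K x)"
    and zero_in_idx: "0 \<in> idx i"
begin

definition greedy_step :: "nat list \<Rightarrow> nat" where
  "greedy_step xs = (case prod_decode (length xs) of (i, k) \<Rightarrow>
     if k \<notin> idx i then 0
     else if k = 0 then LEAST x. x \<in> T \<and> x \<notin> set xs
     else LEAST x. x \<in> K (xs ! prod_encode (i, 0)) \<and> x \<notin> set xs)"

fun greedy_prefix :: "nat \<Rightarrow> nat list" where
  "greedy_prefix 0 = []"
| "greedy_prefix (Suc s) = greedy_prefix s @ [greedy_step (greedy_prefix s)]"

definition greedy :: "nat \<Rightarrow> nat" where
  "greedy s = greedy_step (greedy_prefix s)"

definition place :: "nat \<Rightarrow> nat \<Rightarrow> nat" where
  "place i k = greedy (prod_encode (i, k))"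

lemma greedy_prefix_eq: "greedy_prefix s = map greedy [0..<s]"
  by (induction s) (simp_all add: greedy_def)

lemma greedy_eq_place: "greedy s = place (fst (prod_decode s)) (snd (prod_decode s))"
  by (simp add: place_def)

lemma place_inactive: "k \<notin> idx i \<Longrightarrow> place i k = 0"
  by (simp add: place_def greedy_def greedy_step_def greedy_prefix_eq)

lemma place_root: "place i 0 = (LEAST x. x \<in> T \<and> x \<notin> greedy ` {..<prod_encode (i, 0)})"
  by (simp add: place_def greedy_def[of "prod_encode (i, 0)"] greedy_step_def greedy_prefix_eq
      zero_in_idx atLeast0LessThan)

lemma place_leaf:
  assumes "k \<in> idx i" and "k \<noteq> 0"
  shows "place i k = (LEAST x. x \<in> K (place i 0) \<and> x \<notin> greedy ` {..<prod_encode (i, k)})"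
  using assms prod_encode_0_less[of k i]
  by (simp add: place_def greedy_def[of "prod_encode (i, k)"] greedy_step_def greedy_prefix_eq
      atLeast0LessThan)

lemma place_root_mem: "place i 0 \<in> T - greedy ` {..<prod_encode (i, 0)}"
  unfolding place_root using infinite_T by (intro Least_fresh) auto

lemma place_mem_K:
  assumes "k \<in> idx i"
  shows "place i k \<in> K (place i 0) - greedy ` {..<prod_encode (i, k)}"
proof (cases "k = 0")
  case True
  then show ?thesis
    using place_root_mem mem_K by auto
next
  case False
  have "infinite (K (place i 0))"
    using place_root_mem infinite_K by blast
  then show ?thesis
    unfolding place_leaf[OF assms False] by (intro Least_fresh) auto
qed

lemma greedy_neq_place:
  assumes "k \<in> idx i" and "s < prod_encode (i, k)"
  shows "greedy s \<noteq> place i k"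
  using place_mem_K[OF assms(1)] assms(2) by (metis DiffD2 image_eqI lessThan_iff)

lemma inj_on_place: "inj_on (\<lambda>(i, k). place i k) {(i, k). k \<in> idx i}"
proof (rule inj_onI, clarsimp)
  fix i k i' k'
  assume k: "k \<in> idx i" and k': "k' \<in> idx i'" and eq: "place i k = place i' k'"
  have "\<not> prod_encode (i, k) < prod_encode (i', k')"
    using greedy_neq_place[OF k'] eq unfolding place_def[of i k] by blast
  moreover have "\<not> prod_encode (i', k') < prod_encode (i, k)"
    using greedy_neq_place[OF k] eq unfolding place_def[of i' k'] by metis
  ultimately show "i = i' \<and> k = k'"
    by (metis linorder_neqE_nat prod.inject prod_encode_eq)
qed

text \<open>Each root is the least element of \<open>T\<close> not used before.\<close>
lemma T_subset_places: "T \<subseteq> {place i k | i k. k \<in> idx i}"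
proof
  fix y
  assume y: "y \<in> T"
  show "y \<in> {place i k | i k. k \<in> idx i}"
  proof (rule ccontr)
    assume unused: "y \<notin> {place i k | i k. k \<in> idx i}"
    have "greedy j \<noteq> y" for j
    proof (cases "snd (prod_decode j) \<in> idx (fst (prod_decode j))")
      case True
      then show ?thesis
        using unused unfolding greedy_eq_place by blast
    next
      case False
      then show ?thesis
        using y zero_notin_T place_inactive[OF False] unfolding greedy_eq_place by metis
    qed
    then have "y \<notin> greedy ` {..<s}" for s
      by auto
    then have "place i 0 \<le> y" for i
      unfolding place_root using y by (intro Least_le) simp
    then have "range (\<lambda>i. place i 0) \<subseteq> {..y}"
      by auto
    moreover have "inj (\<lambda>i. place i 0)"
    proof (rule injI)
      fix i j
      assume "place i 0 = place j 0"
      then show "i = j"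
        using inj_onD[OF inj_on_place, of "(i, 0)" "(j, 0)"] zero_in_idx by simp
    qed
    ultimately show False
      by (metis finite_atMost finite_imageD finite_subset infinite_UNIV_nat)
  qed
qed

end

lemma reach_sym: "reach V E u v \<Longrightarrow> reach V E v u"
proof -
  have "symp (\<lambda>u v. u \<in> V \<and> v \<in> V \<and> {u, v} \<in> E)"
    by (auto intro!: sympI simp: insert_commute)
  then show "reach V E u v \<Longrightarrow> reach V E v u"
    unfolding reach_def by (rule sympD[OF symp_rtranclp])
qed

lemma reach_component_eq:
  assumes "reach V E u v"
  shows "{w \<in> V. reach V E v w} = {w \<in> V. reach V E u w}"
  using assms reach_sym[OF assms] unfolding reach_def by (auto intro: rtranclp_trans)

lemma component_indexing:
  fixes V :: "'a set" and E :: "'a set set"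
  assumes "countable V" and "infinite (components V E)"
  obtains cmp pos :: "'a \<Rightarrow> nat" where
    "inj_on (\<lambda>v. (cmp v, pos v)) V"
    "\<And>i. \<exists>v\<in>V. cmp v = i \<and> pos v = 0"
    "\<And>u v. u \<in> V \<Longrightarrow> v \<in> V \<Longrightarrow> {u, v} \<in> E \<Longrightarrow> cmp u = cmp v"
proof -
  define comp where "comp v = {w \<in> V. reach V E v w}" for v
  have comp_self: "v \<in> comp v" if "v \<in> V" for v
    using that unfolding comp_def reach_def by simp
  have comp_eq: "comp u = comp v" if "u \<in> comp v" for u v
    using that unfolding comp_def by (simp add: reach_component_eq)
  have components: "components V E = comp ` V"
    unfolding components_def comp_def by auto
  define cn where "cn = from_nat_into (components V E)"
  have "bij_betw cn UNIV (components V E)"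
    unfolding cn_def using assms components by (intro bij_betw_from_nat_into) auto
  then have inj_cn: "inj cn" and range_cn: "range cn = comp ` V"
    unfolding bij_betw_def components by auto
  define cmp where "cmp v = inv cn (comp v)" for v
  have cn_cmp: "cn (cmp v) = comp v" if "v \<in> V" for v
    unfolding cmp_def using that range_cn by (metis f_inv_into_f image_eqI)
  define root where "root i = (SOME v. v \<in> cn i)" for i
  have root: "root i \<in> V \<and> cmp (root i) = i" for i
  proof -
    obtain w where "w \<in> V" "cn i = comp w"
      using range_cn by (metis imageE rangeI)
    then have "root i \<in> comp w"
      unfolding root_def using comp_self by (metis someI)
    then have "root i \<in> V" and "comp (root i) = cn i"
      using \<open>cn i = comp w\<close> comp_eq unfolding comp_def by auto
    then show ?thesis
      unfolding cmp_def using inv_f_f[OF inj_cn] by simp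
  qed
  define pos where "pos v = (if v = root (cmp v) then 0 else Suc (to_nat_on V v))" for v
  show thesis
  proof
    show "inj_on (\<lambda>v. (cmp v, pos v)) V"
      using inj_on_to_nat_on[OF assms(1)] unfolding pos_def by (auto intro!: inj_onI dest: inj_onD split: if_splits)
    show "\<exists>v\<in>V. cmp v = i \<and> pos v = 0" for i
      using root[of i] unfolding pos_def by (intro bexI[of _ "root i"]) auto
    show "cmp u = cmp v" if "u \<in> V" "v \<in> V" "{u, v} \<in> E" for u v
    proof -
      have "v \<in> comp u"
        using that unfolding comp_def reach_def by auto
      then show ?thesis
        unfolding cmp_def using comp_eq by metis
    qed
  qed
qed

lemma simple_graph_edgeE:
  assumes "simple_graph V E" and "e \<in> E"
  obtains u v where "e = {u, v}" "u \<in> V" "v \<in> V" "u \<noteq> v"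
  using assms unfolding simple_graph_def by blast

lemma is_copy_image:
  assumes graph: "simple_graph V E" and inj: "inj_on f V" and pos: "f ` V \<subseteq> {1..}"
  shows "is_copy V E (f ` V) ((`) f ` E)"
  unfolding is_copy_def
proof (intro conjI ballI exI)
  show "f ` V \<subseteq> {1..}"
    by (fact pos)
  show "(`) f ` E \<subseteq> KN_edges"
  proof
    fix e'
    assume "e' \<in> (`) f ` E"
    then obtain e where e: "e \<in> E" "e' = f ` e"
      by blast
    obtain u v where uv: "e = {u, v}" "u \<in> V" "v \<in> V" "u \<noteq> v"
      using graph e(1) by (rule simple_graph_edgeE)
    then have "f u \<noteq> f v" "1 \<le> f u" "1 \<le> f v"
      using inj pos by (auto simp: inj_on_eq_iff)
    then show "e' \<in> KN_edges"
      unfolding KN_edges_def e(2) uv(1) by blast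
  qed
  show "e' \<subseteq> f ` V" if "e' \<in> (`) f ` E" for e'
    using that graph by (auto elim: simple_graph_edgeE)
  show "bij_betw f V (f ` V)"
    using inj by (simp add: bij_betw_imageI)
  show "{u, v} \<in> E \<longleftrightarrow> {f u, f v} \<in> (`) f ` E" if "u \<in> V" "v \<in> V" for u v
  proof
    assume "{u, v} \<in> E"
    then show "{f u, f v} \<in> (`) f ` E"
      by (intro image_eqI[where x = "{u, v}"]) simp_all
  next
    assume "{f u, f v} \<in> (`) f ` E"
    then obtain e where e: "e \<in> E" "f ` e = f ` {u, v}"
      by auto
    moreover have "e \<subseteq> V"
      using graph e(1) by (auto elim: simple_graph_edgeE)
    ultimately show "{u, v} \<in> E"
      using inj that by (metis inj_on_image_eq_iff empty_subsetI insert_subset)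
  qed
qed

lemma monochromatic_image:
  assumes "simple_graph V E"
    and "\<And>u v. u \<in> V \<Longrightarrow> v \<in> V \<Longrightarrow> {u, v} \<in> E \<Longrightarrow> u \<noteq> v \<Longrightarrow> \<phi> {f u, f v} = c"
  shows "Defs.monochromatic \<phi> ((`) f ` E)"
  unfolding Defs.monochromatic_def
proof (intro exI ballI)
  fix e'
  assume "e' \<in> (`) f ` E"
  then obtain e where e: "e \<in> E" "e' = f ` e"
    by blast
  obtain u v where "e = {u, v}" "u \<in> V" "v \<in> V" "u \<noteq> v"
    using assms(1) e(1) by (rule simple_graph_edgeE)
  then show "\<phi> e' = c"
    using assms(2) e by auto
qed

lemma upper_density_le_Rd_col:
  assumes "is_copy V E W F" and "Defs.monochromatic \<phi> F"
  shows "upper_density W \<le> Rd_col \<phi> V E"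
  unfolding Rd_col_def using assms by (auto intro!: Sup_upper)

lemma monochromatic_embedding_covering:
  fixes V :: "'a set" and E :: "'a set set"
  assumes "countable V" and "infinite (components V E)"
    and "infinite T" and "T \<subseteq> infinite_clique_vertices \<phi> c"
  obtains f where "inj_on f V" "f ` V \<subseteq> {1..}" "T \<subseteq> f ` V"
    "\<And>u v. u \<in> V \<Longrightarrow> v \<in> V \<Longrightarrow> {u, v} \<in> E \<Longrightarrow> u \<noteq> v \<Longrightarrow> \<phi> {f u, f v} = c"
proof -
  obtain cmp pos :: "'a \<Rightarrow> nat" where inj: "inj_on (\<lambda>v. (cmp v, pos v)) V"
    and root: "\<And>i. \<exists>v\<in>V. cmp v = i \<and> pos v = 0"
    and edge: "\<And>u v. u \<in> V \<Longrightarrow> v \<in> V \<Longrightarrow> {u, v} \<in> E \<Longrightarrow> cmp u = cmp v"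
    using component_indexing[OF assms(1,2)] by blast
  define K where "K x = (SOME K. x \<in> K \<and> mono_clique \<phi> c K \<and> infinite K)" for x
  have K: "x \<in> K x \<and> mono_clique \<phi> c (K x) \<and> infinite (K x)" if "x \<in> T" for x
  proof -
    have "\<exists>K. x \<in> K \<and> mono_clique \<phi> c K \<and> infinite K"
      using that assms(4) unfolding infinite_clique_vertices_def by blast
    then show ?thesis
      unfolding K_def by (rule someI_ex)
  qed
  define idx where "idx i = pos ` {v \<in> V. cmp v = i}" for i
  interpret star_cover T K idx
  proof
    show "0 \<notin> T"
      using K unfolding mono_clique_def by fastforce
    show "0 \<in> idx i" for i
      using root[of i] unfolding idx_def by force
  qed (use assms(3) K in auto)
  define f where "f v = place (cmp v) (pos v)" for v
  have f_K: "f v \<in> K (place (cmp v) 0)" if "v \<in> V" for v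
    using place_mem_K that unfolding f_def idx_def by blast
  have K_clique: "mono_clique \<phi> c (K (place i 0))" for i
    using K place_root_mem by blast
  show thesis
  proof
    show "inj_on f V"
    proof (rule inj_onI)
      fix u v
      assume "u \<in> V" "v \<in> V" "f u = f v"
      then have "(cmp u, pos u) = (cmp v, pos v)"
        using inj_onD[OF inj_on_place, of "(cmp u, pos u)" "(cmp v, pos v)"]
        unfolding f_def idx_def by auto
      then show "u = v"
        using inj \<open>u \<in> V\<close> \<open>v \<in> V\<close> unfolding inj_on_def by blast
    qed
    show "f ` V \<subseteq> {1..}"
      using f_K K_clique unfolding mono_clique_def by blast
    show "T \<subseteq> f ` V"
      using T_subset_places unfolding f_def idx_def by blast
    show "\<phi> {f u, f v} = c" if "u \<in> V" "v \<in> V" "{u, v} \<in> E" "u \<noteq> v" for u v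
    proof -
      have "f u \<noteq> f v"
        using \<open>inj_on f V\<close> that by (auto dest: inj_onD)
      moreover have "f u \<in> K (place (cmp u) 0)" "f v \<in> K (place (cmp u) 0)"
        using f_K that edge by metis+
      ultimately show ?thesis
        using K_clique unfolding mono_clique_def by blast
    qed
  qed
qed

theorem mainTheorem10:
  fixes r :: nat and V :: "'a set" and E :: "'a set set"
  assumes "r \<ge> 1"
    and "simple_graph V E"
    and "countable V"
    and "infinite (components V E)"
  shows "Rd r V E \<ge> ereal (1 / real r)"
  unfolding Rd_def
proof (rule Inf_greatest, clarify)
  fix \<phi>
  assume "coloring r \<phi>"
  then obtain c where "c < r" and dense: "ereal (1 / r) \<le> upper_density (infinite_clique_vertices \<phi> c)"
    using upper_density_pigeonhole[OF assms(1) finite_not_in_infinite_cliques] by blast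
  then have "infinite (infinite_clique_vertices \<phi> c)"
    using assms(1) upper_density_finite by force
  then obtain f where inj: "inj_on f V" and pos: "f ` V \<subseteq> {1..}"
    and cover: "infinite_clique_vertices \<phi> c \<subseteq> f ` V"
    and mono: "\<And>u v. u \<in> V \<Longrightarrow> v \<in> V \<Longrightarrow> {u, v} \<in> E \<Longrightarrow> u \<noteq> v \<Longrightarrow> \<phi> {f u, f v} = c"
    using monochromatic_embedding_covering[OF assms(3,4)] by blast
  have "Defs.monochromatic \<phi> ((`) f ` E)"
    using assms(2) mono by (rule monochromatic_image)
  then have "upper_density (f ` V) \<le> Rd_col \<phi> V E"
    using is_copy_image[OF assms(2) inj pos] by (rule upper_density_le_Rd_col[rotated])
  with dense show "ereal (1 / r) \<le> Rd_col \<phi> V E"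
    using upper_density_mono[OF cover] by order
qed

end
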